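(* Let $\mathcal{S}$ be finite, $\Pi$ irreducible stochastic on $\mathcal{S}$, $\kappa(x,y):=\pi_{xy}-\mathbf{1}_{x=y}$, $Q=(q(y))$ the invariant distribution, and assume detailed balance $q(y)\kappa(y,z)=q(z)\kappa(z,y)$ for all $y,z$. Let $\Phi:(0,\infty)\to\mathbb{R}$ be convex, continuously differentiable with continuous strictly positive second derivative, $\Phi(1)=0$, $\varphi:=\Phi'$. Let $\boldsymbol{\ell}_t=\ell(t,\cdot)$, $\ell(t,y):=p(t,y)/q(y)$, where $p(t,\cdot)$ is the time-$t$ law of the chain with generator $\Pi-\mathrm{I}$ started from a positive initial distribution. Fix $t_0>0$, $\varepsilon>0$, a continuous curve $(\psi_t)_{t_0\le t<t_0+\varepsilon}$ of functions $\mathcal{S}\to\mathbb{R}$, and a curve $(\ell^\psi_t)_{t_0\le t<t_0+\varepsilon}$ of positive functions with $\ell^\psi_{t_0}=\boldsymbol{\ell}_{t_0}$ and $\partial_t\ell^\psi_t+\nabla\cdot(\vartheta_{\boldsymbol{\ell}_t}\nabla\psi_t)=0$; let $P^\psi(t):=(q(x)\ell^\psi_t(x))_x$. Then for $t\in[t_0,t_0+\varepsilon)$, $$\partial_tH^\Phi\big(P^\psi(t)\,|\,Q\big)=\big\langle\varphi(\ell^\psi_t),\psi_t\big\rangle_{\mathbb{H}^1_\Theta(\mathcal{S},\boldsymbol{\ell}_tQ)} .$$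
   Context: $H^\Phi(P\,|\,Q):=\sum_yq(y)\Phi(p(y)/q(y))$. $\mathcal{Z}:=\{(x,y):\kappa(x,y)>0\}$, $c(x,y):=\frac12\kappa(x,y)q(x)$, $\nabla f(x,y):=f(y)-f(x)$, $(\nabla\cdot F)(x):=\frac12\sum_{y\neq x}\kappa(x,y)[F(x,y)-F(y,x)]$. $\Theta^\Phi(a,b):=\frac{a-b}{\varphi(a)-\varphi(b)}$ for $a\ne b$, $\Theta^\Phi(b,b):=1/\Phi''(b)$; for positive $\ell$, $\vartheta_\ell(x,y):=\Theta^\Phi(\ell(x),\ell(y))$ and $\langle f,g\rangle_{\mathbb{H}^1_\Theta(\mathcal{S},\ell Q)}:=\sum_{(x,y)\in\mathcal{Z}}c(x,y)\vartheta_\ell(x,y)\nabla f(x,y)\nabla g(x,y)$. *)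

theory Defs
  imports "HOL-Analysis.Analysis"
begin

definition stochastic :: "('a::finite \<Rightarrow> 'a \<Rightarrow> real) \<Rightarrow> bool" where
  "stochastic P \<longleftrightarrow> (\<forall>x y. P x y \<ge> 0) \<and> (\<forall>x. (\<Sum>y\<in>UNIV. P x y) = 1)"

definition irreducible_kernel :: "('a \<Rightarrow> 'a \<Rightarrow> real) \<Rightarrow> bool" where
  "irreducible_kernel P \<longleftrightarrow> (\<forall>x y. (x, y) \<in> {(u, v). P u v > 0}\<^sup>*)"

definition kappa :: "('a \<Rightarrow> 'a \<Rightarrow> real) \<Rightarrow> 'a \<Rightarrow> 'a \<Rightarrow> real" where
  "kappa P x y = P x y - (if x = y then 1 else 0)"

definition invariant_distribution :: "('a::finite \<Rightarrow> 'a \<Rightarrow> real) \<Rightarrow> ('a \<Rightarrow> real) \<Rightarrow> bool" where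
  "invariant_distribution P q \<longleftrightarrow> (\<forall>y. q y \<ge> 0) \<and> (\<Sum>y\<in>UNIV. q y) = 1 \<and>
     (\<forall>y. (\<Sum>x\<in>UNIV. q x * P x y) = q y)"

fun matpow :: "('a::finite \<Rightarrow> 'a \<Rightarrow> real) \<Rightarrow> nat \<Rightarrow> 'a \<Rightarrow> 'a \<Rightarrow> real" where
  "matpow P 0 x y = (if x = y then 1 else 0)"
| "matpow P (Suc n) x y = (\<Sum>z\<in>UNIV. matpow P n x z * P z y)"

text \<open>Time-t law of the continuous-time chain with generator \<Pi> - I started from p0:
  p(t) = p0 exp(t(\<Pi> - I)) = e^{-t} sum_n t^n/n! p0 \<Pi>^n.\<close>
definition chain_law :: "('a::finite \<Rightarrow> 'a \<Rightarrow> real) \<Rightarrow> ('a \<Rightarrow> real) \<Rightarrow> real \<Rightarrow> 'a \<Rightarrow> real" where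
  "chain_law P p0 t y =
     (\<Sum>x\<in>UNIV. p0 x * (exp (- t) * (\<Sum>n. t ^ n / fact n * matpow P n x y)))"

definition grad :: "('a \<Rightarrow> real) \<Rightarrow> 'a \<Rightarrow> 'a \<Rightarrow> real" where
  "grad f x y = f y - f x"

definition divg :: "('a::finite \<Rightarrow> 'a \<Rightarrow> real) \<Rightarrow> ('a \<Rightarrow> 'a \<Rightarrow> real) \<Rightarrow> 'a \<Rightarrow> real" where
  "divg P F x = 1/2 * (\<Sum>y\<in>{y. y \<noteq> x}. kappa P x y * (F x y - F y x))"

text \<open>\<Theta>^\<Phi>(a,b), with \<phi> = \<Phi>' and Phi2 = \<Phi>''.\<close>
definition Theta :: "(real \<Rightarrow> real) \<Rightarrow> (real \<Rightarrow> real) \<Rightarrow> real \<Rightarrow> real \<Rightarrow> real" where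
  "Theta \<phi> Phi2 a b = (if a \<noteq> b then (a - b) / (\<phi> a - \<phi> b) else 1 / Phi2 b)"

definition vartheta :: "(real \<Rightarrow> real) \<Rightarrow> (real \<Rightarrow> real) \<Rightarrow> ('a \<Rightarrow> real) \<Rightarrow> 'a \<Rightarrow> 'a \<Rightarrow> real" where
  "vartheta \<phi> Phi2 l x y = Theta \<phi> Phi2 (l x) (l y)"

definition H1_inner :: "('a::finite \<Rightarrow> 'a \<Rightarrow> real) \<Rightarrow> ('a \<Rightarrow> real) \<Rightarrow> (real \<Rightarrow> real) \<Rightarrow> (real \<Rightarrow> real)
    \<Rightarrow> ('a \<Rightarrow> real) \<Rightarrow> ('a \<Rightarrow> real) \<Rightarrow> ('a \<Rightarrow> real) \<Rightarrow> real" where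
  "H1_inner P q \<phi> Phi2 l f g =
     (\<Sum>(x, y)\<in>{(x, y). kappa P x y > 0}.
        (1/2 * kappa P x y * q x) * vartheta \<phi> Phi2 l x y * grad f x y * grad g x y)"

definition relent :: "(real \<Rightarrow> real) \<Rightarrow> ('a::finite \<Rightarrow> real) \<Rightarrow> ('a \<Rightarrow> real) \<Rightarrow> real" where
  "relent Phi p q = (\<Sum>y\<in>UNIV. q y * Phi (p y / q y))"

end

theory Submission
  imports Defs
begin

text \<open>By the chain rule the entropy derivative is \<open>\<Sum>\<^sub>y q(y) \<phi>(\<ell>\<^sup>\<psi>\<^sub>t y) \<partial>\<^sub>t\<ell>\<^sup>\<psi>\<^sub>t y\<close>.
  Since \<open>\<Theta>\<close> is symmetric, detailed balance makes \<open>q(y) \<kappa>(y,z) \<vartheta>(y,z) \<nabla>\<psi>(y,z)\<close>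
  antisymmetric in \<open>(y,z)\<close>, and a discrete integration by parts turns the sum into the
  \<open>\<bbbH>\<^sup>1\<^sub>\<Theta>\<close> inner product.\<close>

lemma Theta_commute: "Theta \<phi> Phi2 a b = Theta \<phi> Phi2 b a"
proof -
  have "(a - b) / (\<phi> a - \<phi> b) = (b - a) / (\<phi> b - \<phi> a)"
    by (metis minus_diff_eq minus_divide_divide)
  then show ?thesis unfolding Theta_def by auto
qed

lemma vartheta_commute: "vartheta \<phi> Phi2 l x y = vartheta \<phi> Phi2 l y x"
  unfolding vartheta_def by (rule Theta_commute)

lemma divg_antisym:
  assumes "\<And>x y. F y x = - F x y"
  shows "divg P F x = (\<Sum>y\<in>UNIV. kappa P x y * F x y)"
proof -
  have "divg P F x = (\<Sum>y\<in>{y. y \<noteq> x}. 1/2 * (kappa P x y * (F x y - F y x)))"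
    unfolding divg_def by (simp add: sum_distrib_left)
  also have "\<dots> = (\<Sum>y\<in>{y. y \<noteq> x}. kappa P x y * F x y)"
  proof (intro sum.cong refl)
    fix y
    show "1/2 * (kappa P x y * (F x y - F y x)) = kappa P x y * F x y"
      using assms[of x y] by simp
  qed
  also have "\<dots> = (\<Sum>y\<in>UNIV. kappa P x y * F x y)"
    using assms[of x x] by (intro sum.mono_neutral_left) auto
  finally show ?thesis .
qed

lemma sum_antisym_by_parts:
  fixes f :: "'a \<Rightarrow> real"
  assumes "finite A" and "\<And>y z. G z y = - G y z"
  shows "(\<Sum>y\<in>A. \<Sum>z\<in>A. f y * G y z) = - (\<Sum>y\<in>A. \<Sum>z\<in>A. (f z - f y) * G y z) / 2"
proof -
  have "(\<Sum>y\<in>A. \<Sum>z\<in>A. f y * G y z) = (\<Sum>z\<in>A. \<Sum>y\<in>A. f y * G y z)"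
    by (rule sum.swap)
  also have "\<dots> = (\<Sum>z\<in>A. \<Sum>y\<in>A. - (f y * G z y))"
    using assms(2) by (intro sum.cong refl) (metis mult_minus_right)
  also have "\<dots> = - (\<Sum>y\<in>A. \<Sum>z\<in>A. f z * G y z)"
    by (simp add: sum_negf)
  finally show ?thesis
    by (simp add: left_diff_distrib sum_subtractf)
qed

lemma H1_inner_eq_sum_UNIV:
  assumes "\<forall>x y. P x y \<ge> 0"
  shows "H1_inner P q \<phi> Phi2 l f g =
    (\<Sum>x\<in>UNIV. \<Sum>y\<in>UNIV. (1/2 * kappa P x y * q x) * vartheta \<phi> Phi2 l x y * grad f x y * grad g x y)"
    (is "_ = (\<Sum>x\<in>UNIV. \<Sum>y\<in>UNIV. ?h x y)")
proof -
  have vanish: "?h x y = 0" if "\<not> kappa P x y > 0" for x y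
  proof (cases "x = y")
    case False
    with that assms have "kappa P x y = 0"
      unfolding kappa_def by (metis antisym not_le diff_zero)
    then show ?thesis by simp
  qed (simp add: grad_def)
  have "H1_inner P q \<phi> Phi2 l f g = (\<Sum>(x, y)\<in>UNIV. ?h x y)"
    unfolding H1_inner_def
    by (rule sum.mono_neutral_left) (use vanish in \<open>auto simp only: finite split_paired_all\<close>)
  then show ?thesis
    by (simp add: sum.cartesian_product)
qed

lemma sum_divg_eq_H1_inner:
  fixes P :: "'a::finite \<Rightarrow> 'a \<Rightarrow> real"
  assumes db: "\<forall>y z. q y * kappa P y z = q z * kappa P z y"
    and nonneg: "\<forall>x y. P x y \<ge> 0"
  shows "(\<Sum>y\<in>UNIV. q y * f y * (- divg P (\<lambda>u v. vartheta \<phi> Phi2 l u v * grad g u v) y))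
       = H1_inner P q \<phi> Phi2 l f g"
proof -
  define G where "G y z = q y * kappa P y z * vartheta \<phi> Phi2 l y z * grad g y z" for y z
  have G_antisym: "G z y = - G y z" for y z
    unfolding G_def grad_def using db vartheta_commute[of \<phi> Phi2 l y z]
    by (simp add: algebra_simps)
  have "divg P (\<lambda>u v. vartheta \<phi> Phi2 l u v * grad g u v) y =
      (\<Sum>z\<in>UNIV. kappa P y z * (vartheta \<phi> Phi2 l y z * grad g y z))" for y
    by (rule divg_antisym) (metis grad_def minus_diff_eq mult_minus_right vartheta_commute)
  then have "(\<Sum>y\<in>UNIV. q y * f y * (- divg P (\<lambda>u v. vartheta \<phi> Phi2 l u v * grad g u v) y))
      = - (\<Sum>y\<in>UNIV. \<Sum>z\<in>UNIV. f y * G y z)"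
    unfolding G_def by (simp add: sum_distrib_left sum_negf algebra_simps)
  also have "\<dots> = (\<Sum>y\<in>UNIV. \<Sum>z\<in>UNIV. (f z - f y) * G y z) / 2"
    using sum_antisym_by_parts[OF finite G_antisym, of f] by simp
  also have "\<dots> = H1_inner P q \<phi> Phi2 l f g"
    unfolding H1_inner_eq_sum_UNIV[OF nonneg] G_def grad_def
    by (simp add: sum_divide_distrib mult_ac)
  finally show ?thesis .
qed

lemma has_real_derivative_relent:
  fixes l :: "real \<Rightarrow> 'a::finite \<Rightarrow> real"
  assumes Phi_deriv: "\<forall>x>0. (Phi has_real_derivative \<phi> x) (at x)"
    and l_pos: "\<And>y. l t y > 0"
    and l_deriv: "\<And>y. ((\<lambda>s. l s y) has_real_derivative D y) (at t within S)"
  shows "((\<lambda>s. relent Phi (\<lambda>y. q y * l s y) q) has_real_derivative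
           (\<Sum>y\<in>UNIV. q y * \<phi> (l t y) * D y)) (at t within S)"
  unfolding relent_def
proof (rule DERIV_sum)
  fix y
  have "((\<lambda>s. Phi (l s y)) has_real_derivative \<phi> (l t y) * D y) (at t within S)"
    using Phi_deriv l_pos by (intro DERIV_chain2[OF _ l_deriv]) blast
  then have "((\<lambda>s. q y * Phi (l s y)) has_real_derivative q y * (\<phi> (l t y) * D y)) (at t within S)"
    by (rule DERIV_cmult)
  then show "((\<lambda>s. q y * Phi (q y * l s y / q y)) has_real_derivative q y * \<phi> (l t y) * D y)
      (at t within S)"
    by (cases "q y = 0") (simp_all add: mult.assoc)
qed

theorem proposition8p4:
  fixes P :: "'a::finite \<Rightarrow> 'a \<Rightarrow> real"
    and q p0 :: "'a \<Rightarrow> real"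
    and Phi \<phi> Phi2 :: "real \<Rightarrow> real"
    and t0 \<epsilon> :: real
    and \<psi> lpsi :: "real \<Rightarrow> 'a \<Rightarrow> real"
  assumes stoch: "stochastic P"
    and irred: "irreducible_kernel P"
    and inv: "invariant_distribution P q"
    and db: "\<forall>y z. q y * kappa P y z = q z * kappa P z y"
    and Phi_convex: "convex_on {0<..} Phi"
    and Phi_deriv: "\<forall>x>0. (Phi has_real_derivative \<phi> x) (at x)"
    and phi_deriv: "\<forall>x>0. (\<phi> has_real_derivative Phi2 x) (at x)"
    and phi_cont: "continuous_on {0<..} \<phi>"
    and Phi2_cont: "continuous_on {0<..} Phi2"
    and Phi2_pos: "\<forall>x>0. Phi2 x > 0"
    and Phi1: "Phi 1 = 0"
    and p0_pos: "\<forall>x. p0 x > 0"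
    and p0_sum: "(\<Sum>x\<in>UNIV. p0 x) = 1"
    and t0_pos: "t0 > 0"
    and eps_pos: "\<epsilon> > 0"
    and psi_cont: "\<forall>x. continuous_on {t0..<t0 + \<epsilon>} (\<lambda>t. \<psi> t x)"
    and lpsi_pos: "\<forall>t\<in>{t0..<t0 + \<epsilon>}. \<forall>x. lpsi t x > 0"
    and lpsi_init: "\<forall>x. lpsi t0 x = chain_law P p0 t0 x / q x"
    and lpsi_eq: "\<forall>t\<in>{t0..<t0 + \<epsilon>}. \<forall>x.
        ((\<lambda>s. lpsi s x) has_real_derivative
           (- divg P (\<lambda>u v. vartheta \<phi> Phi2 (\<lambda>y. chain_law P p0 t y / q y) u v
                              * grad (\<psi> t) u v) x))
        (at t within {t0..<t0 + \<epsilon>})"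
  shows "\<forall>t\<in>{t0..<t0 + \<epsilon>}.
    ((\<lambda>s. relent Phi (\<lambda>x. q x * lpsi s x) q) has_real_derivative
       H1_inner P q \<phi> Phi2 (\<lambda>y. chain_law P p0 t y / q y) (\<lambda>x. \<phi> (lpsi t x)) (\<psi> t))
    (at t within {t0..<t0 + \<epsilon>})"
proof
  fix t assume t: "t \<in> {t0..<t0 + \<epsilon>}"
  have nonneg: "\<forall>x y. P x y \<ge> 0"
    using stoch unfolding stochastic_def by blast
  have "((\<lambda>s. relent Phi (\<lambda>x. q x * lpsi s x) q) has_real_derivative
      (\<Sum>y\<in>UNIV. q y * \<phi> (lpsi t y) *
         (- divg P (\<lambda>u v. vartheta \<phi> Phi2 (\<lambda>y. chain_law P p0 t y / q y) u v
                           * grad (\<psi> t) u v) y)))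
    (at t within {t0..<t0 + \<epsilon>})"
    using lpsi_pos lpsi_eq t by (intro has_real_derivative_relent[OF Phi_deriv]) blast+
  then show "((\<lambda>s. relent Phi (\<lambda>x. q x * lpsi s x) q) has_real_derivative
       H1_inner P q \<phi> Phi2 (\<lambda>y. chain_law P p0 t y / q y) (\<lambda>x. \<phi> (lpsi t x)) (\<psi> t))
    (at t within {t0..<t0 + \<epsilon>})"
    unfolding sum_divg_eq_H1_inner[OF db nonneg] .
qed

end
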